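(* Let $(X,\tau_1,\tau_2)$ be a bitopological space, $i,j\in\{1,2\}$, $i\neq j$, which is $(i,j)$-almost regular, $(i,j)_1$-nearly paralindelöf, an $(i,j)$-$P_r$-space, a $(j,i)$-$P$-space and a $j$-$P$-space. Then for every cover $\mathcal U$ of $X$ by $(i,j)$-regular open sets there is a cover $\mathcal M$ of $X$ by $i$-open sets such that for every $p\in X$ the star $\mathrm{St}(p,\mathcal M)=\bigcup\{M\in\mathcal M:p\in M\}$ is contained in some member of $\mathcal U$.
   Context: $(X,\tau_1,\tau_2)$ is a bitopological space and $i,j\in\{1,2\}$, $i\neq j$. For $k\in\{1,2\}$ and $A\subseteq X$, $k\text{-}\mathrm{int}(A)$ and $k\text{-}\mathrm{cl}(A)$ denote interior and closure with respect to $\tau_k$; "$k$-open"/"$k$-closed" mean $\tau_k$-open/$\tau_k$-closed. A set $A$ is $(i,j)$-regular open if $A=i\text{-}\mathrm{int}(j\text{-}\mathrm{cl}(A))$. A family $\mathcal V$ refines a family $\mathcal U$ if every member of $\mathcal V$ is contained in some member of $\mathcal U$; a family is a cover of $X$ if its union is $X$. A family $\mathcal V$ is $k$-locally countable if every $x\in X$ has a $k$-open neighbourhood meeting at most countably many members of $\mathcal V$. $X$ is a $k$-$P$-space if every intersection of countably many $k$-open sets is $k$-open. $X$ is a $(j,i)$-$P$-space if every intersection of countably many (possibly just one) $j$-open sets is $i$-open. $X$ is an $(i,j)$-$P_r$-space if every intersection of countably many $(i,j)$-regular open sets is $(i,j)$-regular open. $X$ is $(i,j)$-almost regular if for each $x\in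 X$ and each $(i,j)$-regular open set $U$ containing $x$ there is an $(i,j)$-regular open set $V$ with $x\in V\subseteq j\text{-}\mathrm{cl}(V)\subseteq U$. $X$ is $(i,j)_1$-nearly paralindelöf if every cover of $X$ by $(i,j)$-regular open sets has a refinement which is a cover of $X$ by $i$-open sets and which is $j$-locally countable. *)

theory Defs
  imports "HOL-Analysis.Analysis"
begin

text \<open>Since the pair (i,j) is an
  arbitrary ordered pair of distinct indices, we state everything for an ordered pair
  (Ti, Tj) of topologies.\<close>

definition bt_space :: "'a topology \<Rightarrow> 'a topology \<Rightarrow> bool" where
  "bt_space Ti Tj \<longleftrightarrow> topspace Ti = topspace Tj"

definition ij_regular_open :: "'a topology \<Rightarrow> 'a topology \<Rightarrow> 'a set \<Rightarrow> bool" where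
  "ij_regular_open Ti Tj A \<longleftrightarrow> A = Ti interior_of (Tj closure_of A)"

definition refines :: "'a set set \<Rightarrow> 'a set set \<Rightarrow> bool" where
  "refines \<V> \<U> \<longleftrightarrow> (\<forall>V\<in>\<V>. \<exists>U\<in>\<U>. V \<subseteq> U)"

definition is_cover :: "'a set \<Rightarrow> 'a set set \<Rightarrow> bool" where
  "is_cover X \<U> \<longleftrightarrow> \<Union>\<U> = X"

definition locally_countable :: "'a topology \<Rightarrow> 'a set set \<Rightarrow> bool" where
  "locally_countable T \<V> \<longleftrightarrow>
     (\<forall>x\<in>topspace T. \<exists>W. openin T W \<and> x \<in> W \<and> countable {V\<in>\<V>. V \<inter> W \<noteq> {}})"

definition P_space :: "'a topology \<Rightarrow> bool" where
  "P_space T \<longleftrightarrow> (\<forall>\<F>. countable \<F> \<and> \<F> \<noteq> {} \<and> (\<forall>F\<in>\<F>. openin T F) \<longrightarrow> openin T (\<Inter>\<F>))"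

definition ji_P_space :: "'a topology \<Rightarrow> 'a topology \<Rightarrow> bool" where
  "ji_P_space Tj Ti \<longleftrightarrow> (\<forall>\<F>. countable \<F> \<and> \<F> \<noteq> {} \<and> (\<forall>F\<in>\<F>. openin Tj F) \<longrightarrow> openin Ti (\<Inter>\<F>))"

definition ij_Pr_space :: "'a topology \<Rightarrow> 'a topology \<Rightarrow> bool" where
  "ij_Pr_space Ti Tj \<longleftrightarrow> (\<forall>\<F>. countable \<F> \<and> \<F> \<noteq> {} \<and> (\<forall>F\<in>\<F>. ij_regular_open Ti Tj F)
      \<longrightarrow> ij_regular_open Ti Tj (\<Inter>\<F>))"

definition ij_almost_regular :: "'a topology \<Rightarrow> 'a topology \<Rightarrow> bool" where
  "ij_almost_regular Ti Tj \<longleftrightarrow>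
     (\<forall>x\<in>topspace Ti. \<forall>U. ij_regular_open Ti Tj U \<and> x \<in> U \<longrightarrow>
        (\<exists>V. ij_regular_open Ti Tj V \<and> x \<in> V \<and> V \<subseteq> Tj closure_of V \<and> Tj closure_of V \<subseteq> U))"

definition ij1_nearly_paralindelof :: "'a topology \<Rightarrow> 'a topology \<Rightarrow> bool" where
  "ij1_nearly_paralindelof Ti Tj \<longleftrightarrow>
     (\<forall>\<U>. is_cover (topspace Ti) \<U> \<and> (\<forall>U\<in>\<U>. ij_regular_open Ti Tj U) \<longrightarrow>
        (\<exists>\<V>. refines \<V> \<U> \<and> is_cover (topspace Ti) \<V> \<and> (\<forall>V\<in>\<V>. openin Ti V)
              \<and> locally_countable Tj \<V>))"

definition star :: "'a \<Rightarrow> 'a set set \<Rightarrow> 'a set" where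
  "star p \<M> = \<Union>{M\<in>\<M>. p \<in> M}"

end

theory Submission
  imports Defs
begin

text \<open>By almost regularity the regular open sets whose j-closure lies in a member of \<U>
  still cover X, so near paralindelofness yields a j-locally countable cover \<V> whose members
  have j-closures inside members g V of \<U>. Around a point x, let W be a j-open neighbourhood
  meeting only countably many V \<in> \<V>. Intersecting W with the complements of the closures
  of those V that x avoids gives an i-open set by the (j,i)-P property, and intersecting the
  sets g V for those V whose closure contains x gives an i-open set by the P_r property; their
  intersection M x is an i-open neighbourhood of x, and every V \<in> \<V> meeting M x has x in
  its closure, hence M x \<subseteq> g V. For p \<in> V0 \<in> \<V>, every M x containing p meets V0,
  so the star of p lies in g V0.\<close>

lemma ij_regular_open_imp_openin:
  "ij_regular_open Ti Tj A \<Longrightarrow> openin Ti A"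
  unfolding ij_regular_open_def by (metis openin_interior_of)

lemma ij_regular_open_topspace:
  "bt_space Ti Tj \<Longrightarrow> ij_regular_open Ti Tj (topspace Ti)"
  unfolding ij_regular_open_def bt_space_def by (metis closure_of_topspace interior_of_topspace)

lemma almost_regular_closure_shrinking_cover:
  assumes "ij_almost_regular Ti Tj"
    and "is_cover (topspace Ti) \<U>"
    and "\<forall>U\<in>\<U>. ij_regular_open Ti Tj U"
  shows "is_cover (topspace Ti) {V. ij_regular_open Ti Tj V \<and> (\<exists>U\<in>\<U>. Tj closure_of V \<subseteq> U)}"
  unfolding is_cover_def
proof (intro equalityI subsetI)
  fix x assume "x \<in> \<Union>{V. ij_regular_open Ti Tj V \<and> (\<exists>U\<in>\<U>. Tj closure_of V \<subseteq> U)}"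
  then show "x \<in> topspace Ti"
    using ij_regular_open_imp_openin openin_subset by blast
next
  fix x assume x: "x \<in> topspace Ti"
  then obtain U where "U \<in> \<U>" "x \<in> U"
    using assms(2) by (auto simp: is_cover_def)
  with assms(1,3) x obtain V where "ij_regular_open Ti Tj V" "x \<in> V" "Tj closure_of V \<subseteq> U"
    unfolding ij_almost_regular_def by blast
  with \<open>U \<in> \<U>\<close> show "x \<in> \<Union>{V. ij_regular_open Ti Tj V \<and> (\<exists>U\<in>\<U>. Tj closure_of V \<subseteq> U)}"
    by blast
qed

lemma nearly_paralindelof_closure_refinement:
  assumes "ij_almost_regular Ti Tj" and "ij1_nearly_paralindelof Ti Tj"
    and "is_cover (topspace Ti) \<U>"
    and "\<forall>U\<in>\<U>. ij_regular_open Ti Tj U"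
  obtains \<V> g where "is_cover (topspace Ti) \<V>" "locally_countable Tj \<V>"
    and "\<forall>V\<in>\<V>. g V \<in> \<U> \<and> Tj closure_of V \<subseteq> g V"
proof -
  let ?\<U>' = "{V. ij_regular_open Ti Tj V \<and> (\<exists>U\<in>\<U>. Tj closure_of V \<subseteq> U)}"
  have "is_cover (topspace Ti) ?\<U>'"
    using almost_regular_closure_shrinking_cover[OF assms(1,3,4)] .
  then obtain \<V> where \<V>: "refines \<V> ?\<U>'" "is_cover (topspace Ti) \<V>" "locally_countable Tj \<V>"
    using assms(2) unfolding ij1_nearly_paralindelof_def by blast
  have "\<exists>U\<in>\<U>. Tj closure_of V \<subseteq> U" if "V \<in> \<V>" for V
  proof -
    obtain V' U where "V \<subseteq> V'" "U \<in> \<U>" "Tj closure_of V' \<subseteq> U"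
      using \<V>(1) \<open>V \<in> \<V>\<close> unfolding refines_def by blast
    then show ?thesis
      using closure_of_mono[of V V' Tj] by blast
  qed
  then obtain g where "\<forall>V\<in>\<V>. g V \<in> \<U> \<and> Tj closure_of V \<subseteq> g V"
    by metis
  with \<V>(2,3) show thesis by (rule that)
qed

lemma neighbourhood_inside_closure_enlargements:
  assumes "bt_space Ti Tj" and "ij_Pr_space Ti Tj" and "ji_P_space Tj Ti"
    and "locally_countable Tj \<V>"
    and "\<forall>V\<in>\<V>. ij_regular_open Ti Tj (g V) \<and> Tj closure_of V \<subseteq> g V"
    and x: "x \<in> topspace Ti"
  shows "\<exists>M. openin Ti M \<and> x \<in> M \<and> (\<forall>V\<in>\<V>. V \<inter> M \<noteq> {} \<longrightarrow> M \<subseteq> g V)"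
proof -
  have ts: "topspace Ti = topspace Tj"
    using assms(1) by (simp add: bt_space_def)
  obtain W where W: "openin Tj W" "x \<in> W" and "countable {V\<in>\<V>. V \<inter> W \<noteq> {}}"
    using assms(4) x ts unfolding locally_countable_def by blast
  define C where "C = {V\<in>\<V>. V \<inter> W \<noteq> {}}"
  have "countable C"
    using \<open>countable {V\<in>\<V>. V \<inter> W \<noteq> {}}\<close> by (simp add: C_def)
  define \<A> where "\<A> = insert W ((\<lambda>V. topspace Tj - Tj closure_of V) ` {V\<in>C. x \<notin> Tj closure_of V})"
  define \<B> where "\<B> = insert (topspace Ti) (g ` {V\<in>C. x \<in> Tj closure_of V})"
  have "openin Ti (\<Inter>\<A>)"
  proof -
    have "countable \<A>" "\<A> \<noteq> {}" "\<forall>F\<in>\<A>. openin Tj F"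
      using W(1) \<open>countable C\<close> by (auto simp: \<A>_def)
    then show ?thesis
      using assms(3) unfolding ji_P_space_def by blast
  qed
  moreover have "openin Ti (\<Inter>\<B>)"
  proof -
    have "countable \<B>" "\<B> \<noteq> {}"
      using \<open>countable C\<close> by (auto simp: \<B>_def)
    moreover have "\<forall>F\<in>\<B>. ij_regular_open Ti Tj F"
      using assms(5) ij_regular_open_topspace[OF assms(1)] by (auto simp: \<B>_def C_def)
    ultimately have "ij_regular_open Ti Tj (\<Inter>\<B>)"
      using assms(2) unfolding ij_Pr_space_def by blast
    then show ?thesis
      by (rule ij_regular_open_imp_openin)
  qed
  ultimately have M_open: "openin Ti (\<Inter>\<A> \<inter> \<Inter>\<B>)"
    by (rule openin_Int)
  have M_centre: "x \<in> \<Inter>\<A> \<inter> \<Inter>\<B>"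
    using W(2) x ts assms(5) by (auto simp: \<A>_def \<B>_def C_def)
  have "\<forall>V\<in>\<V>. V \<inter> (\<Inter>\<A> \<inter> \<Inter>\<B>) \<noteq> {} \<longrightarrow> \<Inter>\<A> \<inter> \<Inter>\<B> \<subseteq> g V"
  proof (intro ballI impI)
    fix V assume V: "V \<in> \<V>" and meets: "V \<inter> (\<Inter>\<A> \<inter> \<Inter>\<B>) \<noteq> {}"
    obtain y where y: "y \<in> V" "y \<in> \<Inter>\<A>"
      using meets by blast
    then have "y \<in> W"
      by (simp add: \<A>_def)
    with y(1) V have "V \<in> C"
      by (auto simp: C_def)
    have "y \<in> Tj closure_of V"
      using closure_of_subset_Int[of Tj V] openin_subset[OF W(1)] \<open>y \<in> W\<close> y(1) by blast
    have "x \<in> Tj closure_of V"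
    proof (rule ccontr)
      assume "x \<notin> Tj closure_of V"
      with \<open>V \<in> C\<close> have "topspace Tj - Tj closure_of V \<in> \<A>"
        by (auto simp: \<A>_def)
      with y(2) \<open>y \<in> Tj closure_of V\<close> show False
        by blast
    qed
    with \<open>V \<in> C\<close> have "g V \<in> \<B>"
      by (auto simp: \<B>_def)
    then show "\<Inter>\<A> \<inter> \<Inter>\<B> \<subseteq> g V"
      by blast
  qed
  then show ?thesis
    using M_open M_centre by blast
qed

lemma star_refinement_from_neighbourhoods:
  assumes "is_cover (topspace T) \<V>"
    and "\<forall>V\<in>\<V>. g V \<in> \<U>"
    and "\<forall>x\<in>topspace T. \<exists>M. openin T M \<and> x \<in> M \<and> (\<forall>V\<in>\<V>. V \<inter> M \<noteq> {} \<longrightarrow> M \<subseteq> g V)"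
  shows "\<exists>\<M>. is_cover (topspace T) \<M> \<and> (\<forall>M\<in>\<M>. openin T M) \<and>
           (\<forall>p\<in>topspace T. \<exists>U\<in>\<U>. star p \<M> \<subseteq> U)"
proof -
  obtain M where M: "\<forall>x\<in>topspace T. openin T (M x) \<and> x \<in> M x \<and>
      (\<forall>V\<in>\<V>. V \<inter> M x \<noteq> {} \<longrightarrow> M x \<subseteq> g V)"
    using bchoice[OF assms(3)] ..
  have "is_cover (topspace T) (M ` topspace T)"
    using M openin_subset unfolding is_cover_def by fast
  moreover have "\<exists>U\<in>\<U>. star p (M ` topspace T) \<subseteq> U" if p: "p \<in> topspace T" for p
  proof -
    obtain V where "V \<in> \<V>" "p \<in> V"
      using assms(1) p unfolding is_cover_def by blast
    then have "star p (M ` topspace T) \<subseteq> g V"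
      using M unfolding star_def by blast
    with \<open>V \<in> \<V>\<close> assms(2) show ?thesis
      by blast
  qed
  ultimately show ?thesis
    using M by (intro exI[of _ "M ` topspace T"]) simp
qed

theorem mainTheorem5:
  fixes Ti Tj :: "'a topology"
  assumes "bt_space Ti Tj"
    and "ij_almost_regular Ti Tj"
    and "ij1_nearly_paralindelof Ti Tj"
    and "ij_Pr_space Ti Tj"
    and "ji_P_space Tj Ti"
    and "P_space Tj"
    and "is_cover (topspace Ti) \<U>"
    and "\<forall>U\<in>\<U>. ij_regular_open Ti Tj U"
  shows "\<exists>\<M>. is_cover (topspace Ti) \<M> \<and> (\<forall>M\<in>\<M>. openin Ti M) \<and>
           (\<forall>p\<in>topspace Ti. \<exists>U\<in>\<U>. star p \<M> \<subseteq> U)"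
proof -
  obtain \<V> g where \<V>: "is_cover (topspace Ti) \<V>" "locally_countable Tj \<V>"
    and g: "\<forall>V\<in>\<V>. g V \<in> \<U> \<and> Tj closure_of V \<subseteq> g V"
    using nearly_paralindelof_closure_refinement[OF assms(2,3,7,8)] .
  have g_regular: "\<forall>V\<in>\<V>. ij_regular_open Ti Tj (g V) \<and> Tj closure_of V \<subseteq> g V"
    using g assms(8) by blast
  have "\<forall>x\<in>topspace Ti. \<exists>M. openin Ti M \<and> x \<in> M \<and> (\<forall>V\<in>\<V>. V \<inter> M \<noteq> {} \<longrightarrow> M \<subseteq> g V)"
    using neighbourhood_inside_closure_enlargements[OF assms(1,4,5) \<V>(2) g_regular] by blast
  with \<V>(1) g show ?thesis
    by (intro star_refinement_from_neighbourhoods) auto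
qed

end
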